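(* For any context $\Gamma$ and formula $A$, there is at most one focused derivation of the sequent $\Gamma\vdash A$.
   Context: Formulas are built from atoms ($p,q,\dots$) by a binary product: every formula is an atom or $A\bullet B$. A context is a finite (possibly empty) list of formulas; commas denote concatenation. A derivation is a finite rooted tree whose nodes are labelled by rule instances and whose edges are labelled by sequents $\Gamma\vdash A$. A context is irreducible if its leftmost formula is not a product (it is empty or begins with an atom). A focused derivation is a derivation with no undischarged premises using only the rules: ($\bullet L$): from $A,B,\Delta\vdash C$ infer $A\bullet B,\Delta\vdash C$; ($\bullet R^{foc}$): from $\Gamma\vdash A$ and $\Delta\vdash B$ infer $\Gamma,\Delta\vdash A\bullet B$, where $\Gamma$ is irreducible; and ($id^{atm}$): $p\vdash p$ for atoms $p$. *)

theory Defs
  imports Main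
begin

datatype 'a fm = Atom 'a | Prod "'a fm" "'a fm"

type_synonym 'a ctx = "'a fm list"

definition irreducible_ctx :: "'a ctx \<Rightarrow> bool" where
  "irreducible_ctx G \<longleftrightarrow> G = [] \<or> (\<exists>p. hd G = Atom p)"

datatype rule_name = ProdL | ProdRfoc | IdAtm

text \<open>A derivation: a finite rooted tree whose nodes are labelled by a rule name and
the sequent concluded at that node (the label of the edge below the node);
the children are the subderivations of the premises, in order.\<close>
datatype 'a deriv = Node rule_name "'a ctx" "'a fm" "'a deriv list"

fun concl :: "'a deriv \<Rightarrow> 'a ctx \<times> 'a fm" where
  "concl (Node r G C ds) = (G, C)"

inductive focused :: "'a deriv \<Rightarrow> bool" where
  prodL: "\<lbrakk> focused d; concl d = (A # B # D, C) \<rbrakk>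
          \<Longrightarrow> focused (Node ProdL (Prod A B # D) C [d])"
| prodRfoc: "\<lbrakk> focused d1; focused d2; concl d1 = (G, A); concl d2 = (D, B);
               irreducible_ctx G \<rbrakk>
          \<Longrightarrow> focused (Node ProdRfoc (G @ D) (Prod A B) [d1, d2])"
| idAtm: "focused (Node IdAtm [Atom p] (Atom p) [])"

end

theory Submission
  imports Defs
begin

text \<open>Every rule preserves the invariant that the atoms of the context, read left to right,
are the atoms of the succedent. Hence the conclusion of a derivation determines which rule
was applied last: a product at the head of the context forces \<open>\<bullet>L\<close>; otherwise the succedent
decides between \<open>\<bullet>R\<^sup>f\<^sup>o\<^sup>c\<close> and the axiom, and in the \<open>\<bullet>R\<^sup>f\<^sup>o\<^sup>c\<close> case the invariant for the left
premise fixes the split of the context.\<close>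

fun leaves :: "'a fm \<Rightarrow> 'a list" where
  "leaves (Atom p) = [p]"
| "leaves (Prod A B) = leaves A @ leaves B"

lemma leaves_nonempty: "leaves A \<noteq> []"
  by (induction A) simp_all

lemma concat_map_leaves_eq_NilD: "concat (map leaves G) = [] \<Longrightarrow> G = []"
  using leaves_nonempty by (cases G) auto

lemma focused_leaves:
  "focused d \<Longrightarrow> concl d = (G, A) \<Longrightarrow> concat (map leaves G) = leaves A"
proof (induction d arbitrary: G A rule: focused.induct)
qed auto

lemma focused_ctx_nonempty:
  assumes "focused d" "concl d = (G, A)"
  shows "G \<noteq> []"
proof
  assume "G = []"
  with focused_leaves[OF assms] have "leaves A = []" by simp
  with leaves_nonempty show False ..
qed

lemma irreducible_ctx_append:
  "irreducible_ctx G \<Longrightarrow> G \<noteq> [] \<Longrightarrow> irreducible_ctx (G @ D)"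
  by (cases G) (auto simp: irreducible_ctx_def)

lemma focused_ctx_prefix_unique:
  assumes "focused d" "concl d = (G, A)" "focused d'" "concl d' = (G', A)"
    and "G @ D = G' @ D'"
  shows "G = G'"
proof -
  have leaves_eq: "concat (map leaves G) = concat (map leaves G')"
    using focused_leaves assms(1-4) by metis
  from assms(5) obtain X where "G = G' @ X \<or> G' = G @ X"
    unfolding append_eq_append_conv2 by blast
  then show ?thesis
  proof
    assume G: "G = G' @ X"
    with leaves_eq have "concat (map leaves X) = []" by simp
    then have "X = []" by (rule concat_map_leaves_eq_NilD)
    with G show ?thesis by simp
  next
    assume G': "G' = G @ X"
    with leaves_eq have "concat (map leaves X) = []" by simp
    then have "X = []" by (rule concat_map_leaves_eq_NilD)
    with G' show ?thesis by simp
  qed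
qed

lemma focused_ProdL_inv:
  assumes "focused d" "concl d = (Prod A B # D, C)"
  obtains d' where "d = Node ProdL (Prod A B # D) C [d']"
    and "focused d'" "concl d' = (A # B # D, C)"
  using assms(1)
proof cases
  case (prodL d' A' B' D' C')
  with assms(2) that show ?thesis by simp
next
  case (prodRfoc d1 d2 G A' D' B')
  have "G \<noteq> []"
    using prodRfoc(2,4) focused_ctx_nonempty by blast
  moreover have "G @ D' = Prod A B # D"
    using prodRfoc(1) assms(2) by simp
  ultimately have "hd G = Prod A B"
    by (metis hd_append2 list.sel(1))
  with \<open>G \<noteq> []\<close> prodRfoc(6) show ?thesis by (simp add: irreducible_ctx_def)
next
  case idAtm
  with assms(2) show ?thesis by simp
qed

lemma focused_ProdRfoc_inv:
  assumes "focused d" "concl d = (G, Prod A B)" "irreducible_ctx G"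
  obtains d1 d2 G1 D1 where "d = Node ProdRfoc G (Prod A B) [d1, d2]" "G = G1 @ D1"
    and "focused d1" "concl d1 = (G1, A)" "focused d2" "concl d2 = (D1, B)"
  using assms(1)
proof cases
  case (prodL d' A' B' D C)
  with assms(2) have "G = Prod A' B' # D" by simp
  with assms(3) show ?thesis by (simp add: irreducible_ctx_def)
next
  case (prodRfoc d1 d2 G1 A' D1 B')
  from assms(2) prodRfoc(1) have "G = G1 @ D1" "A' = A" "B' = B" by simp_all
  with prodRfoc(1-5) that show ?thesis by blast
next
  case idAtm
  with assms(2) show ?thesis by simp
qed

lemma focused_IdAtm_inv:
  assumes "focused d" "concl d = (G, Atom p)" "irreducible_ctx G"
  shows "d = Node IdAtm [Atom p] (Atom p) []"
  using assms(1)
proof cases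
  case (prodL d' A' B' D C)
  with assms(2) have "G = Prod A' B' # D" by simp
  with assms(3) show ?thesis by (simp add: irreducible_ctx_def)
next
  case (prodRfoc d1 d2 G' A' D' B')
  with assms(2) show ?thesis by simp
next
  case idAtm
  with assms(2) show ?thesis by simp
qed

theorem lemma1p18:
  fixes G :: "'a ctx" and A :: "'a fm" and d1 d2 :: "'a deriv"
  assumes "focused d1" and "concl d1 = (G, A)"
      and "focused d2" and "concl d2 = (G, A)"
  shows "d1 = d2"
  using assms
proof (induction d1 arbitrary: G A d2 rule: focused.induct)
  case (prodL d A1 B1 D C)
  from prodL.prems(1,3) have "concl d2 = (Prod A1 B1 # D, C)" by simp
  with prodL.prems(2) obtain d' where d2: "d2 = Node ProdL (Prod A1 B1 # D) C [d']"
    and d': "focused d'" "concl d' = (A1 # B1 # D, C)"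
    by (rule focused_ProdL_inv)
  have "d = d'" using prodL.IH[OF prodL.hyps(2) d'] .
  with d2 show ?case by simp
next
  case (prodRfoc e1 e2 G1 A1 D1 B1)
  have "irreducible_ctx (G1 @ D1)"
    using prodRfoc.hyps(1,3,5) focused_ctx_nonempty irreducible_ctx_append by blast
  moreover have "concl d2 = (G1 @ D1, Prod A1 B1)"
    using prodRfoc.prems by simp
  ultimately obtain f1 f2 G2 D2
    where d2: "d2 = Node ProdRfoc (G1 @ D1) (Prod A1 B1) [f1, f2]" "G1 @ D1 = G2 @ D2"
      and f: "focused f1" "concl f1 = (G2, A1)" "focused f2" "concl f2 = (D2, B1)"
    using focused_ProdRfoc_inv[OF prodRfoc.prems(2)] by blast
  have "G1 = G2" "D1 = D2"
    using focused_ctx_prefix_unique[OF prodRfoc.hyps(1,3) f(1,2) d2(2)] d2(2) by auto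
  with f have "e1 = f1" "e2 = f2"
    using prodRfoc.IH(1)[OF prodRfoc.hyps(3) f(1)] prodRfoc.IH(2)[OF prodRfoc.hyps(4) f(3)]
    by simp_all
  with d2 show ?case by simp
next
  case (idAtm p)
  from idAtm.prems(1) have "G = [Atom p]" "A = Atom p" by auto
  with idAtm.prems(3) have "concl d2 = ([Atom p], Atom p)" by simp
  with idAtm.prems(2) have "d2 = Node IdAtm [Atom p] (Atom p) []"
    by (rule focused_IdAtm_inv) (simp add: irreducible_ctx_def)
  then show ?case by simp
qed

end
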